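(* The space $\mathcal{M}(H^1(\mathbb{R}))$ of bounded Fourier multipliers on $H^1(\mathbb{R})$ is weak$^*$-closed in $B(H^1(\mathbb{R}))$, where $B(H^1(\mathbb{R}))$ carries the weak$^*$-topology coming from the isometric identification $B(H^1(\mathbb{R}))\simeq\big((C_0(\mathbb{R})/Z_0)\widehat{\otimes}H^1(\mathbb{R})\big)^*$ given by $\langle T,\dot f\otimes h\rangle=\int_{\mathbb{R}}(Th)(t)f(-t)\,dt$.
   Context: $H^1(\mathbb{R})=\{h\in L^1(\mathbb{R}):\widehat h(u)=0\ \forall u\le0\}$, $\widehat h(u)=\int h(t)e^{-itu}dt$. $H^\infty(\mathbb{R})$ is the weak$^*$-closure of $H^1(\mathbb{R})\cap L^\infty(\mathbb{R})$ in $L^\infty(\mathbb{R})$ (equivalently the bounded functions whose Poisson integral on the upper half-plane is analytic). $Z_0=C_0(\mathbb{R})\cap H^\infty(\mathbb{R})$, and $\dot f$ is the class of $f\in C_0(\mathbb{R})$ in $C_0(\mathbb{R})/Z_0$. One has $(C_0(\mathbb{R})/Z_0)^*\simeq H^1(\mathbb{R})$ via $\langle h,\dot f\rangle=\int h(t)f(-t)dt$, which yields the stated identification of $B(H^1(\mathbb{R}))$ as the dual of the projective tensor product $(C_0(\mathbb{R})/Z_0)\widehat{\otimes}H^1(\mathbb{R})$. $\mathcal{M}(H^1(\mathbb{R}))$ is the set of $T\in B(H^1(\mathbb{R}))$ of the form $Th=\mathcal{F}^{-1}(m\widehat h)$ for some $m\in L^\infty(0,\infty)$. *)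

theory Defs
  imports "HOL-Analysis.Analysis"
begin

definition fourier :: "(real \<Rightarrow> complex) \<Rightarrow> real \<Rightarrow> complex" where
  "fourier h u = (\<integral>t. h t * exp (- \<i> * complex_of_real (t * u)) \<partial>lborel)"

definition L1_norm :: "(real \<Rightarrow> complex) \<Rightarrow> real" where
  "L1_norm h = (\<integral>t. cmod (h t) \<partial>lborel)"

definition H1 :: "(real \<Rightarrow> complex) set" where
  "H1 = {h. integrable lborel h \<and> (\<forall>u\<le>0. fourier h u = 0)}"

definition C0 :: "(real \<Rightarrow> complex) set" where
  "C0 = {f. continuous_on UNIV f \<and> (f \<longlongrightarrow> 0) at_infinity}"

definition sup_norm :: "(real \<Rightarrow> complex) \<Rightarrow> real" where
  "sup_norm f = (SUP t. cmod (f t))"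

text \<open>Bounded linear operators on H^1(R), represented as maps on representatives;
  linearity is required up to a.e. equality.\<close>
definition BH1 :: "((real \<Rightarrow> complex) \<Rightarrow> (real \<Rightarrow> complex)) set" where
  "BH1 = {T. (\<forall>h\<in>H1. T h \<in> H1)
            \<and> (\<forall>h\<in>H1. \<forall>g\<in>H1. \<forall>c::complex.
                  AE t in lborel. T (\<lambda>s. c * h s + g s) t = c * T h t + T g t)
            \<and> (\<exists>C. \<forall>h\<in>H1. L1_norm (T h) \<le> C * L1_norm h)}"

definition MH1 :: "((real \<Rightarrow> complex) \<Rightarrow> (real \<Rightarrow> complex)) set" where
  "MH1 = {T\<in>BH1. \<exists>m::real \<Rightarrow> complex. m \<in> borel_measurable lborel
            \<and> (\<exists>C. AE u in lborel. u > 0 \<longrightarrow> cmod (m u) \<le> C)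
            \<and> (\<forall>h\<in>H1. AE u in lborel. u > 0 \<longrightarrow> fourier (T h) u = m u * fourier h u)}"

text \<open>Elements of the projective tensor product (C_0/Z_0) \<otimes> H^1 are represented by
  sequences (f_n, h_n) with f_n in C_0, h_n in H^1 and sum ||f_n|| ||h_n|| finite;
  their pairing with T is sum_n integral (T h_n)(t) f_n(-t) dt.\<close>
definition tensor_reps :: "((nat \<Rightarrow> real \<Rightarrow> complex) \<times> (nat \<Rightarrow> real \<Rightarrow> complex)) set" where
  "tensor_reps = {(f, h). (\<forall>n. f n \<in> C0 \<and> h n \<in> H1)
                    \<and> summable (\<lambda>n. sup_norm (f n) * L1_norm (h n))}"

definition pairing ::
  "((real \<Rightarrow> complex) \<Rightarrow> (real \<Rightarrow> complex)) \<Rightarrow> (nat \<Rightarrow> real \<Rightarrow> complex) \<Rightarrow> (nat \<Rightarrow> real \<Rightarrow> complex) \<Rightarrow> complex" where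
  "pairing T f h = (\<Sum>n. \<integral>t. T (h n) t * f n (- t) \<partial>lborel)"

definition weak_star_BH1 :: "((real \<Rightarrow> complex) \<Rightarrow> (real \<Rightarrow> complex)) topology" where
  "weak_star_BH1 = topology_generated_by
     (insert BH1 {{T \<in> BH1. pairing T f h \<in> U} | f h U. (f, h) \<in> tensor_reps \<and> open U})"

end

theory Submission
  imports Defs "HOL-Probability.Probability" "HOL-Real_Asymp.Real_Asymp"
begin

(* A bounded operator T on H^1 is a Fourier multiplier exactly when its multiplier defect
   hat(T a) hat(b) - hat(T b) hat(a) vanishes for all a, b in H^1: then hat(T k) / hat(k) does not
   depend on k, is continuous where it is defined, and is bounded by the norm C of T, because
   the same holds for T^n and so |m|^n |hat(k)| <= C^n ||k||_1 for every n.
   The defect is detected by weak*-continuous functionals. Pairing T with a (x) G_b - b (x) G_a,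
   where G_b is the correlation of b with a Gaussian of width 1/d modulated at frequency u,
   gives the average of the defect against a Gaussian of width d around u. For a multiplier
   the defect vanishes almost everywhere (on (0,oo) by the multiplier identity, on (-oo,0]
   because the transforms of H^1 functions vanish there), so these averages are 0; conversely,
   as d -> 0 they converge to the defect at u. Hence the multipliers form the common zero set
   of a family of weak*-continuous functionals. *)

lemma (in pair_sigma_finite) Fubini_integral_product_bound:
  fixes F :: "'a \<Rightarrow> 'b \<Rightarrow> 'c::{banach, second_countable_topology}"
  assumes [measurable]: "(\<lambda>(x, y). F x y) \<in> borel_measurable (M1 \<Otimes>\<^sub>M M2)"
    and bound: "\<And>x y. norm (F x y) \<le> A x * B y"
    and A: "integrable M1 A" "\<And>x. 0 \<le> A x" and B: "integrable M2 B" "\<And>y. 0 \<le> B y"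
  shows "(\<integral>x. (\<integral>y. F x y \<partial>M2) \<partial>M1) = (\<integral>y. (\<integral>x. F x y \<partial>M1) \<partial>M2)"
proof -
  have [measurable]: "A \<in> borel_measurable M1" "B \<in> borel_measurable M2"
    using A B by auto
  have slices: "integrable M2 (\<lambda>y. F x y)" if "x \<in> space M1" for x
    by (rule Bochner_Integration.integrable_bound[where f = "\<lambda>y. A x * B y"])
       (use B bound A(2) that in \<open>auto intro!: AE_I2 simp: abs_mult\<close>)
  have slice_norms: "(\<integral>y. norm (F x y) \<partial>M2) \<le> A x * (\<integral>y. B y \<partial>M2)"
    if "x \<in> space M1" for x
    using integral_mono[OF integrable_norm[OF slices[OF that]] integrable_mult_right[OF B(1)] bound]
    by simp
  have "integrable M1 (\<lambda>x. \<integral>y. norm (F x y) \<partial>M2)"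
    by (rule Bochner_Integration.integrable_bound[where f = "\<lambda>x. A x * (\<integral>y. B y \<partial>M2)"])
       (use A B slice_norms in \<open>auto intro!: AE_I2 M2.borel_measurable_lebesgue_integral
          simp: abs_mult integral_nonneg_AE\<close>)
  then have "integrable (M1 \<Otimes>\<^sub>M M2) (\<lambda>(x, y). F x y)"
    by (intro Fubini_integrable) (auto intro: slices)
  then show ?thesis
    by (simp add: Fubini_integral)
qed

abbreviation cnormal :: "real \<Rightarrow> complex" where
  "cnormal v \<equiv> complex_of_real (std_normal_density v)"

abbreviation fchar :: "real \<Rightarrow> real \<Rightarrow> complex" where
  "fchar t w \<equiv> exp (- \<i> * complex_of_real (t * w))"

lemma norm_fchar [simp]: "norm (fchar t w) = 1"
  by (simp add: norm_exp_eq_Re)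

lemma fchar_add: "fchar (s + t) w = fchar s w * fchar t w"
  by (simp add: exp_add[symmetric] algebra_simps)

lemma norm_fourier_le_L1_norm:
  assumes "integrable lborel h"
  shows "norm (fourier h u) \<le> L1_norm h"
  unfolding fourier_def L1_norm_def
  using integral_norm_bound[of lborel "\<lambda>t. h t * fchar t u"] by (simp add: norm_mult)

lemma continuous_on_fourier:
  assumes "integrable lborel h"
  shows "continuous_on UNIV (fourier h)"
proof -
  have [measurable]: "h \<in> borel_measurable lborel"
    using assms by auto
  have "(\<lambda>n. fourier h (X n)) \<longlonglongrightarrow> fourier h u" if "X \<longlonglongrightarrow> u" for X u
    unfolding fourier_def
    by (rule integral_dominated_convergence[where w = "\<lambda>t. norm (h t)"])
       (use assms that in \<open>auto intro!: tendsto_intros simp: norm_mult\<close>)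
  then show ?thesis
    by (simp add: continuous_on_eq_continuous_at continuous_at_sequentially comp_def)
qed

lemma borel_measurable_fourier [measurable]:
  "integrable lborel h \<Longrightarrow> fourier h \<in> borel_measurable borel"
  by (simp add: borel_measurable_continuous_onI continuous_on_fourier)

lemma open_fourier_nonzero: "integrable lborel h \<Longrightarrow> open {u. fourier h u \<noteq> 0}"
  by (intro open_Collect_neq continuous_on_fourier continuous_on_const)

lemma H1_integrable: "h \<in> H1 \<Longrightarrow> integrable lborel h"
  unfolding H1_def by simp

lemma zero_in_H1: "(\<lambda>_. 0) \<in> H1"
  unfolding H1_def fourier_def by simp

lemma L1_norm_nonneg [simp]: "0 \<le> L1_norm h"
  unfolding L1_norm_def by simp

lemma BH1_H1: "T \<in> BH1 \<Longrightarrow> h \<in> H1 \<Longrightarrow> T h \<in> H1"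
  unfolding BH1_def by auto

lemma BH1_bound:
  assumes "T \<in> BH1"
  obtains C where "0 \<le> C" "\<And>h. h \<in> H1 \<Longrightarrow> L1_norm (T h) \<le> C * L1_norm h"
proof -
  obtain C where C: "\<And>h. h \<in> H1 \<Longrightarrow> L1_norm (T h) \<le> C * L1_norm h"
    using assms unfolding BH1_def by blast
  have "L1_norm (T h) \<le> max C 0 * L1_norm h" if "h \<in> H1" for h
    using C[OF that] mult_right_mono[of C "max C 0" "L1_norm h"] by simp
  then show thesis
    using that[of "max C 0"] by simp
qed

lemma funpow_H1: "T \<in> BH1 \<Longrightarrow> h \<in> H1 \<Longrightarrow> (T ^^ n) h \<in> H1"
  by (induction n) (auto intro: BH1_H1)

lemma L1_norm_funpow_le:
  assumes T: "T \<in> BH1" "0 \<le> C" "\<And>h. h \<in> H1 \<Longrightarrow> L1_norm (T h) \<le> C * L1_norm h" and h: "h \<in> H1"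
  shows "L1_norm ((T ^^ n) h) \<le> C ^ n * L1_norm h"
proof (induction n)
  case (Suc n)
  have "L1_norm ((T ^^ Suc n) h) \<le> C * L1_norm ((T ^^ n) h)"
    using T funpow_H1[OF T(1) h] by simp
  also have "\<dots> \<le> C * (C ^ n * L1_norm h)"
    using Suc T(2) by (rule mult_left_mono)
  finally show ?case
    by simp
qed simp

lemma fourier_std_normal_density:
  "(\<integral>v. cnormal v * exp (\<i> * complex_of_real (z * v)) \<partial>lborel) = complex_of_real (exp (- (z^2) / 2))"
proof -
  have "char std_normal_distribution z = complex_of_real (exp (- (z^2) / 2))"
    by (simp add: char_std_normal_distribution)
  moreover have "char std_normal_distribution z
      = (\<integral>v. std_normal_density v *\<^sub>R exp (\<i> * complex_of_real (z * v)) \<partial>lborel)"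
    unfolding char_def by (subst integral_density) auto
  ultimately show ?thesis
    by (simp add: scaleR_conv_of_real)
qed

lemma integrable_gaussian_mult:
  fixes c :: "real \<Rightarrow> complex"
  assumes [measurable]: "c \<in> borel_measurable borel" and bound: "\<And>w. norm (c w) \<le> M"
  shows "integrable lborel (\<lambda>v. cnormal v * c (u - d * v))"
proof (rule Bochner_Integration.integrable_bound[where f = "\<lambda>v. M * std_normal_density v"])
  show "AE v in lborel. norm (cnormal v * c (u - d * v)) \<le> norm (M * std_normal_density v)"
    using order_trans[OF norm_ge_zero bound]
    by (intro AE_I2) (simp add: norm_mult, metis bound mult.commute mult_left_mono normal_density_nonneg)
qed auto

lemma gaussian_smoothing_tendsto:
  fixes c :: "real \<Rightarrow> complex"
  assumes cont: "continuous_on UNIV c" and bound: "\<And>w. norm (c w) \<le> M" and X: "X \<longlonglongrightarrow> 0"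
  shows "(\<lambda>n. \<integral>v. cnormal v * c (u - X n * v) \<partial>lborel) \<longlonglongrightarrow> c u"
proof -
  have [measurable]: "c \<in> borel_measurable borel"
    using cont by (rule borel_measurable_continuous_onI)
  have "(\<lambda>n. \<integral>v. cnormal v * c (u - X n * v) \<partial>lborel) \<longlonglongrightarrow> (\<integral>v. cnormal v * c u \<partial>lborel)"
  proof (rule integral_dominated_convergence[where w = "\<lambda>v. M * std_normal_density v"])
    have "(\<lambda>n. c (u - X n * v)) \<longlonglongrightarrow> c (u - 0 * v)" for v
      by (intro continuous_on_tendsto_compose[OF cont] tendsto_intros X) auto
    then show "AE v in lborel. (\<lambda>n. cnormal v * c (u - X n * v)) \<longlonglongrightarrow> cnormal v * c u"
      by (intro AE_I2 tendsto_mult tendsto_const) simp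
    show "AE v in lborel. norm (cnormal v * c (u - X n * v)) \<le> M * std_normal_density v" for n
      by (intro AE_I2) (simp add: norm_mult, metis bound mult.commute mult_left_mono normal_density_nonneg)
  qed auto
  then show ?thesis
    by simp
qed

lemma tendsto_integral_translates:
  fixes E :: "real \<Rightarrow> complex"
  assumes b: "integrable lborel b" and [measurable]: "E \<in> borel_measurable borel" "L \<in> borel_measurable borel"
    and bound: "\<And>z. norm (E z) \<le> B" and lim: "\<And>y. (\<lambda>n. E (y - X n)) \<longlonglongrightarrow> L y"
  shows "(\<lambda>n. \<integral>y. b y * E (y - X n) \<partial>lborel) \<longlonglongrightarrow> (\<integral>y. b y * L y \<partial>lborel)"
proof (rule integral_dominated_convergence[where w = "\<lambda>y. B * norm (b y)"])
  have [measurable]: "b \<in> borel_measurable lborel"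
    using b by auto
  show "(\<lambda>y. b y * L y) \<in> borel_measurable lborel" "\<And>n. (\<lambda>y. b y * E (y - X n)) \<in> borel_measurable lborel"
    by measurable
  show "integrable lborel (\<lambda>y. B * norm (b y))"
    using b by simp
  show "AE y in lborel. (\<lambda>n. b y * E (y - X n)) \<longlonglongrightarrow> b y * L y"
    using lim by (intro AE_I2 tendsto_mult tendsto_const)
  show "AE y in lborel. norm (b y * E (y - X n)) \<le> B * norm (b y)" for n
    using bound by (intro AE_I2) (metis mult.commute mult_right_mono norm_ge_zero norm_mult)
qed

lemma correlation_in_C0:
  fixes E :: "real \<Rightarrow> complex"
  assumes b: "integrable lborel b" and E: "E \<in> C0" and bound: "\<And>z. norm (E z) \<le> B"
  shows "(\<lambda>t. \<integral>y. b y * E (y - t) \<partial>lborel) \<in> C0"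
proof -
  have E_cont: "continuous_on UNIV E" and E_lim: "(E \<longlongrightarrow> 0) at_infinity"
    using E unfolding C0_def by auto
  have E_meas [measurable]: "E \<in> borel_measurable borel"
    using E_cont by (rule borel_measurable_continuous_onI)
  have vanishing: "(\<lambda>n. \<integral>y. b y * E (y - X n) \<partial>lborel) \<longlonglongrightarrow> 0"
    if "filterlim X at_infinity sequentially" for X
  proof -
    have "filterlim (\<lambda>n. - X n) at_infinity sequentially"
      using that by (simp add: filterlim_at_infinity_conv_norm_at_top)
    then have "filterlim (\<lambda>n. y + - X n) at_infinity sequentially" for y
      by (rule tendsto_add_filterlim_at_infinity[OF tendsto_const])
    then have "(\<lambda>n. E (y + - X n)) \<longlonglongrightarrow> 0" for y
      by (rule filterlim_compose[OF E_lim])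
    then have "(\<lambda>n. E (y - X n)) \<longlonglongrightarrow> 0" for y
      by simp
    then show ?thesis
      using tendsto_integral_translates[OF b E_meas _ bound, of "\<lambda>_. 0"] by simp
  qed
  have "(\<lambda>n. \<integral>y. b y * E (y - X n) \<partial>lborel) \<longlonglongrightarrow> (\<integral>y. b y * E (y - t) \<partial>lborel)"
    if "X \<longlonglongrightarrow> t" for X t
  proof (rule tendsto_integral_translates[OF b _ _ bound])
    show "(\<lambda>n. E (y - X n)) \<longlonglongrightarrow> E (y - t)" for y
      using that E_cont by (intro continuous_on_tendsto_compose[OF E_cont] tendsto_intros) auto
  qed measurable
  then have "continuous_on UNIV (\<lambda>t. \<integral>y. b y * E (y - t) \<partial>lborel)"
    by (simp add: continuous_on_eq_continuous_at continuous_at_sequentially comp_def)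
  moreover have "((\<lambda>t. \<integral>y. b y * E (y - t) \<partial>lborel) \<longlongrightarrow> 0) at_infinity"
    unfolding at_infinity_eq_at_top_bot
    by (intro filterlim_sup tendsto_at_topI_sequentially tendsto_at_botI_sequentially vanishing
        filterlim_at_top_imp_at_infinity filterlim_mono[OF _ at_bot_le_at_infinity order_refl])
  ultimately show ?thesis
    unfolding C0_def by simp
qed

definition modulated_gaussian :: "real \<Rightarrow> real \<Rightarrow> real \<Rightarrow> complex" where
  "modulated_gaussian u d z = fchar z u * complex_of_real (exp (- ((d * z)^2) / 2))"

lemma modulated_gaussian_eq_integral:
  "modulated_gaussian u d z = (\<integral>v. cnormal v * fchar z (u - d * v) \<partial>lborel)"
proof -
  have "modulated_gaussian u d z
      = fchar z u * (\<integral>v. cnormal v * exp (\<i> * complex_of_real ((d * z) * v)) \<partial>lborel)"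
    unfolding modulated_gaussian_def fourier_std_normal_density ..
  also have "\<dots> = (\<integral>v. cnormal v * (fchar z u * exp (\<i> * complex_of_real ((d * z) * v))) \<partial>lborel)"
    by (subst integral_mult_right_zero[symmetric]) (simp add: mult.left_commute)
  also have "\<dots> = (\<integral>v. cnormal v * fchar z (u - d * v) \<partial>lborel)"
  proof (rule Bochner_Integration.integral_cong[OF refl])
    fix v
    have "fchar z u * exp (\<i> * complex_of_real ((d * z) * v)) = fchar z (u - d * v)"
      by (simp add: exp_add[symmetric] algebra_simps)
    then show "cnormal v * (fchar z u * exp (\<i> * complex_of_real ((d * z) * v)))
        = cnormal v * fchar z (u - d * v)"
      by simp
  qed
  finally show ?thesis .
qed

lemma norm_modulated_gaussian: "norm (modulated_gaussian u d z) = exp (- ((d * z)^2) / 2)"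
  by (simp add: modulated_gaussian_def norm_mult)

lemma modulated_gaussian_C0:
  assumes "d > 0"
  shows "modulated_gaussian u d \<in> C0"
proof -
  have "((\<lambda>z. exp (- ((d * z)^2) / 2)) \<longlongrightarrow> 0) at_top"
    using assms by real_asymp
  moreover have "((\<lambda>z. exp (- ((d * z)^2) / 2)) \<longlongrightarrow> 0) at_bot"
    using assms by real_asymp
  ultimately have "((\<lambda>z. exp (- ((d * z)^2) / 2)) \<longlongrightarrow> 0) at_infinity"
    unfolding at_infinity_eq_at_top_bot by (rule filterlim_sup)
  then have "((\<lambda>z. norm (modulated_gaussian u d z)) \<longlongrightarrow> 0) at_infinity"
    by (simp only: norm_modulated_gaussian)
  then have "(modulated_gaussian u d \<longlongrightarrow> 0) at_infinity"
    by (rule tendsto_norm_zero_cancel)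
  moreover have "continuous_on UNIV (modulated_gaussian u d)"
    unfolding modulated_gaussian_def by (intro continuous_intros) auto
  ultimately show ?thesis
    unfolding C0_def by simp
qed

definition gauss_correlation :: "real \<Rightarrow> real \<Rightarrow> (real \<Rightarrow> complex) \<Rightarrow> real \<Rightarrow> complex" where
  "gauss_correlation u d b t = (\<integral>y. b y * modulated_gaussian u d (y - t) \<partial>lborel)"

lemma gauss_correlation_C0:
  assumes "d > 0" "integrable lborel b"
  shows "gauss_correlation u d b \<in> C0"
  unfolding gauss_correlation_def[abs_def]
  by (rule correlation_in_C0[OF assms(2) modulated_gaussian_C0[OF assms(1)], where B = 1])
     (simp add: norm_modulated_gaussian)

lemma gauss_correlation_eq:
  assumes b: "integrable lborel b"
  shows "gauss_correlation u d b t
    = (\<integral>v. cnormal v * fchar (- t) (u - d * v) * fourier b (u - d * v) \<partial>lborel)"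
proof -
  have [measurable]: "b \<in> borel_measurable lborel"
    using b by auto
  have "gauss_correlation u d b t
      = (\<integral>y. (\<integral>v. b y * cnormal v * fchar (- t) (u - d * v) * fchar y (u - d * v) \<partial>lborel) \<partial>lborel)"
    unfolding gauss_correlation_def modulated_gaussian_eq_integral
  proof (intro Bochner_Integration.integral_cong refl)
    fix y
    have split: "fchar (y - t) w = fchar (- t) w * fchar y w" for w
      using fchar_add[of "- t" y w] by simp
    have "b y * (\<integral>v. cnormal v * fchar (y - t) (u - d * v) \<partial>lborel)
        = (\<integral>v. b y * (cnormal v * (fchar (- t) (u - d * v) * fchar y (u - d * v))) \<partial>lborel)"
      unfolding split by (rule integral_mult_right_zero[symmetric])
    then show "b y * (\<integral>v. cnormal v * fchar (y - t) (u - d * v) \<partial>lborel)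
        = (\<integral>v. b y * cnormal v * fchar (- t) (u - d * v) * fchar y (u - d * v) \<partial>lborel)"
      by (simp only: mult.assoc)
  qed
  also have "\<dots> = (\<integral>v. (\<integral>y. b y * cnormal v * fchar (- t) (u - d * v) * fchar y (u - d * v) \<partial>lborel) \<partial>lborel)"
    by (rule lborel_pair.Fubini_integral_product_bound[where A = "\<lambda>y. norm (b y)" and B = std_normal_density])
       (use b in \<open>auto simp: norm_mult\<close>)
  also have "\<dots> = (\<integral>v. cnormal v * fchar (- t) (u - d * v) * fourier b (u - d * v) \<partial>lborel)"
    unfolding fourier_def
    by (subst integral_mult_right_zero[symmetric]) (simp add: algebra_simps)
  finally show ?thesis .
qed

lemma integral_mult_gauss_correlation:
  assumes a: "integrable lborel a" and b: "integrable lborel b"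
  shows "(\<integral>t. a t * gauss_correlation u d b (- t) \<partial>lborel)
    = (\<integral>v. cnormal v * (fourier a (u - d * v) * fourier b (u - d * v)) \<partial>lborel)"
proof -
  have [measurable]: "a \<in> borel_measurable lborel"
    using a by auto
  have "(\<integral>t. a t * gauss_correlation u d b (- t) \<partial>lborel)
      = (\<integral>t. (\<integral>v. a t * cnormal v * fchar t (u - d * v) * fourier b (u - d * v) \<partial>lborel) \<partial>lborel)"
    unfolding gauss_correlation_eq[OF b]
    by (subst integral_mult_right_zero[symmetric]) (simp add: mult.assoc)
  also have "\<dots> = (\<integral>v. (\<integral>t. a t * cnormal v * fchar t (u - d * v) * fourier b (u - d * v) \<partial>lborel) \<partial>lborel)"
  proof (rule lborel_pair.Fubini_integral_product_bound
      [where A = "\<lambda>t. norm (a t)" and B = "\<lambda>v. std_normal_density v * L1_norm b"])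
    show "norm (a t * cnormal v * fchar t (u - d * v) * fourier b (u - d * v))
        \<le> norm (a t) * (std_normal_density v * L1_norm b)" for t v
      using norm_fourier_le_L1_norm[OF b, of "u - d * v"]
      by (simp add: norm_mult mult.assoc) (intro mult_left_mono, auto)
    show "0 \<le> std_normal_density v * L1_norm b" for v
      by simp
  qed (use a b in auto)
  also have "\<dots> = (\<integral>v. cnormal v * (fourier a (u - d * v) * fourier b (u - d * v)) \<partial>lborel)"
  proof (intro Bochner_Integration.integral_cong refl)
    fix v
    let ?w = "u - d * v"
    have "(\<integral>t. a t * cnormal v * fchar t ?w * fourier b ?w \<partial>lborel)
        = (\<integral>t. (cnormal v * fourier b ?w) * (a t * fchar t ?w) \<partial>lborel)"
      by (intro Bochner_Integration.integral_cong refl) (simp only: ac_simps)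
    also have "\<dots> = (cnormal v * fourier b ?w) * fourier a ?w"
      unfolding fourier_def by (rule integral_mult_right_zero)
    finally show "(\<integral>t. a t * cnormal v * fchar t ?w * fourier b ?w \<partial>lborel)
        = cnormal v * (fourier a ?w * fourier b ?w)"
      by (simp only: ac_simps)
  qed
  finally show ?thesis .
qed

definition probe_C0 :: "real \<Rightarrow> real \<Rightarrow> (real \<Rightarrow> complex) \<Rightarrow> (real \<Rightarrow> complex) \<Rightarrow> nat \<Rightarrow> real \<Rightarrow> complex" where
  "probe_C0 u d a b n =
    (if n = 0 then gauss_correlation u d b else if n = 1 then (\<lambda>t. - gauss_correlation u d a t) else (\<lambda>_. 0))"

definition probe_H1 :: "(real \<Rightarrow> complex) \<Rightarrow> (real \<Rightarrow> complex) \<Rightarrow> nat \<Rightarrow> real \<Rightarrow> complex" where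
  "probe_H1 a b n = (if n = 0 then a else if n = 1 then b else (\<lambda>_. 0))"

lemma probe_in_tensor_reps:
  assumes "d > 0" "a \<in> H1" "b \<in> H1"
  shows "(probe_C0 u d a b, probe_H1 a b) \<in> tensor_reps"
proof -
  have "gauss_correlation u d a \<in> C0" "gauss_correlation u d b \<in> C0"
    using assms by (auto intro: gauss_correlation_C0 H1_integrable)
  then have "probe_C0 u d a b n \<in> C0" for n
    unfolding probe_C0_def C0_def by (auto intro: continuous_intros tendsto_minus_cancel_left[THEN iffD1])
  moreover have "probe_H1 a b n \<in> H1" for n
    unfolding probe_H1_def using assms zero_in_H1 by simp
  moreover have "summable (\<lambda>n. sup_norm (probe_C0 u d a b n) * L1_norm (probe_H1 a b n))"
    by (rule summable_finite[of "{0, 1}"]) (auto simp: probe_H1_def L1_norm_def)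
  ultimately show ?thesis
    unfolding tensor_reps_def by simp
qed

lemma pairing_probe:
  "pairing T (probe_C0 u d a b) (probe_H1 a b)
    = (\<integral>t. T a t * gauss_correlation u d b (- t) \<partial>lborel)
    - (\<integral>t. T b t * gauss_correlation u d a (- t) \<partial>lborel)"
proof -
  have "pairing T (probe_C0 u d a b) (probe_H1 a b)
      = (\<Sum>n\<in>{0, 1}. \<integral>t. T (probe_H1 a b n) t * probe_C0 u d a b n (- t) \<partial>lborel)"
    unfolding pairing_def by (rule suminf_finite) (auto simp: probe_H1_def probe_C0_def)
  then show ?thesis
    by (simp add: probe_H1_def probe_C0_def)
qed

definition multiplier_defect ::
  "((real \<Rightarrow> complex) \<Rightarrow> (real \<Rightarrow> complex)) \<Rightarrow> (real \<Rightarrow> complex) \<Rightarrow> (real \<Rightarrow> complex) \<Rightarrow> real \<Rightarrow> complex" where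
  "multiplier_defect T a b w = fourier (T a) w * fourier b w - fourier (T b) w * fourier a w"

lemma multiplier_defect_continuous_bounded:
  assumes "T \<in> BH1" "a \<in> H1" "b \<in> H1"
  shows "continuous_on UNIV (multiplier_defect T a b)"
    and "norm (multiplier_defect T a b w) \<le> L1_norm (T a) * L1_norm b + L1_norm (T b) * L1_norm a"
proof -
  have i: "integrable lborel (T a)" "integrable lborel (T b)" "integrable lborel a" "integrable lborel b"
    using assms BH1_H1 H1_integrable by auto
  show "continuous_on UNIV (multiplier_defect T a b)"
    unfolding multiplier_defect_def[abs_def] by (intro continuous_intros continuous_on_fourier i)
  have "norm (multiplier_defect T a b w)
      \<le> norm (fourier (T a) w) * norm (fourier b w) + norm (fourier (T b) w) * norm (fourier a w)"
    unfolding multiplier_defect_def by (metis norm_mult norm_triangle_ineq4)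
  also have "\<dots> \<le> L1_norm (T a) * L1_norm b + L1_norm (T b) * L1_norm a"
    by (intro add_mono mult_mono norm_fourier_le_L1_norm i) auto
  finally show "norm (multiplier_defect T a b w) \<le> L1_norm (T a) * L1_norm b + L1_norm (T b) * L1_norm a" .
qed

lemma pairing_probe_eq_smoothed_defect:
  assumes T: "T \<in> BH1" and a: "a \<in> H1" and b: "b \<in> H1"
  shows "pairing T (probe_C0 u d a b) (probe_H1 a b)
    = (\<integral>v. cnormal v * multiplier_defect T a b (u - d * v) \<partial>lborel)"
proof -
  have i: "integrable lborel (T a)" "integrable lborel (T b)" "integrable lborel a" "integrable lborel b"
    using T a b BH1_H1 H1_integrable by auto
  have "integrable lborel (\<lambda>v. cnormal v * (fourier f (u - d * v) * fourier g (u - d * v)))"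
    if "integrable lborel f" "integrable lborel g" for f g
    using that by (intro integrable_gaussian_mult[where M = "L1_norm f * L1_norm g"])
                  (auto simp: norm_mult intro!: mult_mono norm_fourier_le_L1_norm)
  then show ?thesis
    unfolding pairing_probe integral_mult_gauss_correlation[OF i(1,4)] integral_mult_gauss_correlation[OF i(2,3)]
    by (subst Bochner_Integration.integral_diff[symmetric])
       (auto simp: i multiplier_defect_def right_diff_distrib)
qed

lemma pairing_probe_MH1:
  assumes S: "S \<in> MH1" and a: "a \<in> H1" and b: "b \<in> H1" and d: "d > 0"
  shows "pairing S (probe_C0 u d a b) (probe_H1 a b) = 0"
proof -
  have SB: "S \<in> BH1"
    using S unfolding MH1_def by auto
  obtain m where m: "\<And>h. h \<in> H1 \<Longrightarrow> AE w in lborel. w > 0 \<longrightarrow> fourier (S h) w = m w * fourier h w"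
    using S unfolding MH1_def by auto
  have "AE w in lborel. multiplier_defect S a b w = 0"
    using m[OF a] m[OF b]
  proof eventually_elim
    case (elim w)
    have "fourier h w = 0" if "w \<le> 0" "h \<in> H1" for h
      using that unfolding H1_def by auto
    then show ?case
      using elim a b BH1_H1[OF SB a] BH1_H1[OF SB b]
      by (cases "w > 0") (auto simp: multiplier_defect_def)
  qed
  moreover have "multiplier_defect S a b \<in> borel_measurable borel"
    using multiplier_defect_continuous_bounded(1)[OF SB a b] by (rule borel_measurable_continuous_onI)
  ultimately have "AE v in lborel. multiplier_defect S a b (u + (- d) * v) = 0"
    using d by (intro AE_borel_affine) auto
  then have "AE v in lborel. cnormal v * multiplier_defect S a b (u - d * v) = 0"
    by eventually_elim simp
  then show ?thesis
    unfolding pairing_probe_eq_smoothed_defect[OF SB a b] by (rule integral_eq_zero_AE)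
qed

lemma multiplier_defect_eq_0:
  assumes T: "T \<in> BH1" and a: "a \<in> H1" and b: "b \<in> H1"
    and zero_pairings: "\<And>d. d > 0 \<Longrightarrow> pairing T (probe_C0 u d a b) (probe_H1 a b) = 0"
  shows "multiplier_defect T a b u = 0"
proof -
  have "(\<lambda>n. \<integral>v. cnormal v * multiplier_defect T a b (u - 1 / Suc n * v) \<partial>lborel)
      \<longlonglongrightarrow> multiplier_defect T a b u"
    using multiplier_defect_continuous_bounded[OF T a b]
    by (intro gaussian_smoothing_tendsto LIMSEQ_Suc[OF lim_const_over_n])
  moreover have "(\<integral>v. cnormal v * multiplier_defect T a b (u - 1 / Suc n * v) \<partial>lborel) = 0" for n
    using zero_pairings[of "1 / Suc n"] by (simp add: pairing_probe_eq_smoothed_defect[OF T a b])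
  ultimately show ?thesis
    using LIMSEQ_unique[OF _ tendsto_const] by simp
qed

lemma le_of_pow_mult_le:
  fixes x c a b :: real
  assumes "0 \<le> c" "0 < a" and pow: "\<And>n. x ^ n * a \<le> c ^ n * b"
  shows "x \<le> c"
proof (rule ccontr)
  assume "\<not> x \<le> c"
  then have "c < x" by simp
  show False
  proof (cases "c = 0")
    case True
    have "0 < x * a"
      using \<open>c < x\<close> \<open>0 < a\<close> True by simp
    then show False
      using pow[of 1] True by simp
  next
    case False
    then have "0 < c" "1 < x / c"
      using \<open>0 \<le> c\<close> \<open>c < x\<close> by auto
    then obtain n where "b / a < (x / c) ^ n"
      using real_arch_pow by blast
    then have "c ^ n * b < x ^ n * a"
      using \<open>0 < a\<close> \<open>0 < c\<close> by (simp add: field_simps power_divide)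
    then show False
      using pow[of n] by simp
  qed
qed

(* Off the set where some transform in H^1 is nonzero, hat(T h) vanishes as well,
   so the junk value 0 there is harmless. *)
definition multiplier_symbol :: "((real \<Rightarrow> complex) \<Rightarrow> (real \<Rightarrow> complex)) \<Rightarrow> real \<Rightarrow> complex" where
  "multiplier_symbol T u =
    (if \<exists>k\<in>H1. fourier k u \<noteq> 0
     then (let k = SOME k. k \<in> H1 \<and> fourier k u \<noteq> 0 in fourier (T k) u / fourier k u)
     else 0)"

lemma open_fourier_support_H1: "open {u. \<exists>k\<in>H1. fourier k u \<noteq> 0}"
  by (auto simp: Collect_bex_eq intro!: open_fourier_nonzero H1_integrable)

context
  fixes T :: "(real \<Rightarrow> complex) \<Rightarrow> (real \<Rightarrow> complex)"
  assumes T: "T \<in> BH1"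
    and defect: "\<And>a b w. a \<in> H1 \<Longrightarrow> b \<in> H1 \<Longrightarrow> multiplier_defect T a b w = 0"
begin

lemma fourier_eq_multiplier_symbol:
  assumes h: "h \<in> H1"
  shows "fourier (T h) u = multiplier_symbol T u * fourier h u"
proof (cases "\<exists>k\<in>H1. fourier k u \<noteq> 0")
  case True
  define k where "k = (SOME k. k \<in> H1 \<and> fourier k u \<noteq> 0)"
  have k: "k \<in> H1" "fourier k u \<noteq> 0"
    using someI_ex[OF True[unfolded Bex_def]] unfolding k_def by auto
  have "fourier (T h) u * fourier k u = fourier (T k) u * fourier h u"
    using defect[OF h k(1), of u] unfolding multiplier_defect_def by simp
  then show ?thesis
    using True k unfolding multiplier_symbol_def k_def[symmetric] by (simp add: field_simps)
next
  case False
  then show ?thesis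
    using BH1_H1[OF T h] by (simp add: multiplier_symbol_def)
qed

lemma continuous_on_multiplier_symbol:
  "continuous_on {u. \<exists>k\<in>H1. fourier k u \<noteq> 0} (multiplier_symbol T)"
proof -
  have "isCont (multiplier_symbol T) u" if k: "k \<in> H1" "fourier k u \<noteq> 0" for k u
  proof -
    have "\<forall>\<^sub>F x in nhds u. fourier (T k) x / fourier k x = multiplier_symbol T x"
      using open_fourier_nonzero[OF H1_integrable[OF k(1)]] k(2) fourier_eq_multiplier_symbol[OF k(1)]
      by (intro eventually_nhds_in_open[THEN eventually_mono]) auto
    moreover have "isCont (\<lambda>x. fourier (T k) x / fourier k x) u"
      using k continuous_on_fourier[OF H1_integrable] BH1_H1[OF T k(1)]
      by (intro continuous_divide) (auto simp: continuous_on_eq_continuous_at)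
    ultimately show ?thesis
      by (rule isCont_cong[THEN iffD1])
  qed
  then show ?thesis
    using open_fourier_support_H1 by (auto simp: continuous_on_eq_continuous_at)
qed

lemma borel_measurable_multiplier_symbol:
  "multiplier_symbol T \<in> borel_measurable lborel"
proof -
  let ?U = "{u. \<exists>k\<in>H1. fourier k u \<noteq> 0}"
  have "(\<lambda>u. indicator ?U u *\<^sub>R multiplier_symbol T u) \<in> borel_measurable borel"
    using open_fourier_support_H1 continuous_on_multiplier_symbol
    by (intro borel_measurable_continuous_on_indicator) auto
  also have "(\<lambda>u. indicator ?U u *\<^sub>R multiplier_symbol T u) = multiplier_symbol T"
    by (auto simp: indicator_def multiplier_symbol_def)
  finally show ?thesis
    by simp
qed

lemma fourier_funpow:
  "h \<in> H1 \<Longrightarrow> fourier ((T ^^ n) h) u = multiplier_symbol T u ^ n * fourier h u"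
  by (induction n) (simp_all add: fourier_eq_multiplier_symbol funpow_H1[OF T])

lemma norm_multiplier_symbol_le:
  assumes "0 \<le> C" "\<And>h. h \<in> H1 \<Longrightarrow> L1_norm (T h) \<le> C * L1_norm h"
  shows "norm (multiplier_symbol T u) \<le> C"
proof (cases "\<exists>k\<in>H1. fourier k u \<noteq> 0")
  case True
  then obtain k where k: "k \<in> H1" "fourier k u \<noteq> 0"
    by blast
  show ?thesis
  proof (rule le_of_pow_mult_le[where a = "norm (fourier k u)" and b = "L1_norm k"])
    fix n
    have "norm (multiplier_symbol T u) ^ n * norm (fourier k u) = norm (fourier ((T ^^ n) k) u)"
      by (simp add: fourier_funpow[OF k(1)] norm_mult norm_power)
    also have "\<dots> \<le> L1_norm ((T ^^ n) k)"
      by (intro norm_fourier_le_L1_norm H1_integrable funpow_H1 T k)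
    also have "\<dots> \<le> C ^ n * L1_norm k"
      by (rule L1_norm_funpow_le[OF T assms k(1)])
    finally show "norm (multiplier_symbol T u) ^ n * norm (fourier k u) \<le> C ^ n * L1_norm k" .
  qed (use assms k in auto)
next
  case False
  then show ?thesis
    using assms by (simp add: multiplier_symbol_def)
qed

lemma MH1_of_multiplier_defect_eq_0: "T \<in> MH1"
proof -
  obtain C where "0 \<le> C" "\<And>h. h \<in> H1 \<Longrightarrow> L1_norm (T h) \<le> C * L1_norm h"
    using BH1_bound[OF T] by blast
  then have "AE u in lborel. u > 0 \<longrightarrow> norm (multiplier_symbol T u) \<le> C"
    using norm_multiplier_symbol_le by simp
  then show ?thesis
    unfolding MH1_def using T borel_measurable_multiplier_symbol fourier_eq_multiplier_symbol
    by blast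
qed

end

definition probes :: "((nat \<Rightarrow> real \<Rightarrow> complex) \<times> (nat \<Rightarrow> real \<Rightarrow> complex)) set" where
  "probes = {(probe_C0 u d a b, probe_H1 a b) | u d a b. d > 0 \<and> a \<in> H1 \<and> b \<in> H1}"

lemma probes_subset_tensor_reps: "probes \<subseteq> tensor_reps"
  unfolding probes_def using probe_in_tensor_reps by blast

lemma MH1_eq_common_zeros_probes:
  "MH1 = {T \<in> BH1. \<forall>(f, h)\<in>probes. pairing T f h = 0}"
proof (intro set_eqI iffI)
  fix T
  assume T: "T \<in> MH1"
  then have "T \<in> BH1"
    unfolding MH1_def by simp
  then show "T \<in> {T \<in> BH1. \<forall>(f, h)\<in>probes. pairing T f h = 0}"
    using pairing_probe_MH1[OF T] unfolding probes_def by blast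
next
  fix T
  assume "T \<in> {T \<in> BH1. \<forall>(f, h)\<in>probes. pairing T f h = 0}"
  then have T: "T \<in> BH1"
    and zero: "\<And>u d a b. d > 0 \<Longrightarrow> a \<in> H1 \<Longrightarrow> b \<in> H1
        \<Longrightarrow> pairing T (probe_C0 u d a b) (probe_H1 a b) = 0"
    unfolding probes_def by blast+
  have "multiplier_defect T a b w = 0" if "a \<in> H1" "b \<in> H1" for a b w
    using T that by (rule multiplier_defect_eq_0) (rule zero[OF _ that])
  then show "T \<in> MH1"
    by (rule MH1_of_multiplier_defect_eq_0[OF T])
qed

lemma topspace_weak_star_BH1: "topspace weak_star_BH1 = BH1"
  unfolding weak_star_BH1_def by auto

lemma closedin_common_zeros:
  assumes "R \<subseteq> tensor_reps"
  shows "closedin weak_star_BH1 {T \<in> BH1. \<forall>(f, h)\<in>R. pairing T f h = 0}"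
proof -
  have "openin weak_star_BH1 {T \<in> BH1. pairing T f h \<in> - {0}}" if "(f, h) \<in> R" for f h
    unfolding weak_star_BH1_def using that assms by (intro topology_generated_by_Basis) blast
  then have "openin weak_star_BH1 (\<Union>(f, h)\<in>R. {T \<in> BH1. pairing T f h \<in> - {0}})"
    by (intro openin_Union) auto
  moreover have "BH1 - {T \<in> BH1. \<forall>(f, h)\<in>R. pairing T f h = 0}
      = (\<Union>(f, h)\<in>R. {T \<in> BH1. pairing T f h \<in> - {0}})"
    by auto
  ultimately show ?thesis
    unfolding closedin_def topspace_weak_star_BH1 by auto
qed

theorem mainTheorem5:
  shows "closedin weak_star_BH1 MH1"
  unfolding MH1_eq_common_zeros_probes
  by (rule closedin_common_zeros[OF probes_subset_tensor_reps])

end
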